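(* Let $a,b\in\mathbb{C}$ with $a\neq0$. Let $U\subseteq\mathbb{C}$ be open and $\lambda:U\to\mathbb{C}$ holomorphic such that, with $y=e^{\lambda}$ and $y^{p}:=e^{p\lambda}$, $y(x)^a=1+axy(x)^b$ for all $x\in U$. (i) If $b\neq1$ and $a-b+1\neq0$, then the function $$F(x)=x\,y(x)-\frac1a\left[\frac{y(x)^{a-b+1}}{a-b+1}-\frac{y(x)^{1-b}}{1-b}\right]$$ satisfies $F'(x)=y(x)$ for all $x\in U$ (wherever $1-bxy^{b-a}\neq0$), i.e. $F$ is an antiderivative of $y$. (ii) If $b=1$, then $F(x)=x\,y(x)-\frac1a\left[\frac{y(x)^{a}}{a}-\lambda(x)\right]$ satisfies $F'(x)=y(x)$ there. (iii) If $b\neq1$, $a-b+1\neq0$, $U$ is a disc centred at $0$ and $\lambda(0)=0$ (so $y(0)=1$), then for all $x\in U$ (along paths in $U$ avoiding points where $1-bty^{b-a}=0$) $$\int_0^x y(t)\,dt=\frac1a\left[\frac{a-b}{a-b+1}\bigl(y(x)^{a-b+1}-1\bigr)+\frac{b}{1-b}\bigl(y(x)^{1-b}-1\bigr)\right].$$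
   Context: This concerns (branches of) solutions of $y^a=1+axy^b$ (the ultra-radical), with complex powers of $y$ computed consistently via the fixed holomorphic logarithm $\lambda=\log y$. In (iii), $y$ is the principal branch, which near $0$ is given by the master series $M(1;a;b;x)=1+x+\sum_{\ell\ge2}\frac{x^\ell}{\ell!}\prod_{\gamma=1}^{\ell-1}(1-a\gamma+b\ell)$. *)

theory Defs
  imports "HOL-Complex_Analysis.Complex_Analysis"
begin

text \<open>Complex powers of y = exp lam computed via the fixed logarithm lam: y^p := exp (p * lam).\<close>

end

theory Submission
  imports Defs
begin

(* Differentiating F gives
     F' = y + lam' * (x * y - (y^(a-b+1) - y^(1-b)) / a),
   and multiplying the defining equation y^a - 1 = a x y^b by y^(1-b) shows that the bracket
   vanishes, so F' = y. Part (iii) is then the fundamental theorem of calculus along contours,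
   with F(0) computed from y(0) = 1. *)

lemma ultraradical_power_diff:
  fixes a b x l :: "'a :: {real_normed_field, banach}"
  assumes "exp (a * l) = 1 + a * x * exp (b * l)"
  shows "exp ((a - b + 1) * l) - exp ((1 - b) * l) = a * x * exp l"
proof -
  have "exp ((a - b + 1) * l) - exp ((1 - b) * l) = (exp (a * l) - 1) * exp ((1 - b) * l)"
    by (simp add: exp_add[symmetric] algebra_simps)
  also have "\<dots> = a * x * (exp ((1 - b) * l) * exp (b * l))"
    using assms by (simp add: algebra_simps)
  also have "exp ((1 - b) * l) * exp (b * l) = exp l"
    by (simp add: exp_add[symmetric] algebra_simps)
  finally show ?thesis .
qed

lemma has_field_derivative_exp_mult_div:
  fixes c :: "'a :: {real_normed_field, banach}"
  assumes "c \<noteq> 0" "(f has_field_derivative f') (at x within S)"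
  shows "((\<lambda>t. exp (c * f t) / c) has_field_derivative exp (c * f x) * f') (at x within S)"
  using assms by (auto intro!: derivative_eq_intros)

lemma has_field_derivative_id_mult_exp:
  fixes f :: "'a :: {real_normed_field, banach} \<Rightarrow> 'a"
  assumes "(f has_field_derivative f') (at x within S)"
  shows "((\<lambda>t. t * exp (f t)) has_field_derivative exp (f x) + x * (exp (f x) * f'))
           (at x within S)"
  using assms by (auto intro!: derivative_eq_intros)

lemma ultraradical_primitive_has_derivative:
  fixes a b x :: "'a :: {real_normed_field, banach}" and lam :: "'a \<Rightarrow> 'a"
  assumes "a \<noteq> 0" "b \<noteq> 1" "a - b + 1 \<noteq> 0"
    and lam': "(lam has_field_derivative l') (at x within S)"
    and eq: "exp (a * lam x) = 1 + a * x * exp (b * lam x)"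
  shows "((\<lambda>t. t * exp (lam t)
              - (1 / a) * (exp ((a - b + 1) * lam t) / (a - b + 1)
                           - exp ((1 - b) * lam t) / (1 - b)))
          has_field_derivative exp (lam x)) (at x within S)"
proof -
  have "1 - b \<noteq> 0"
    using \<open>b \<noteq> 1\<close> by simp
  have "((\<lambda>t. t * exp (lam t)
              - (1 / a) * (exp ((a - b + 1) * lam t) / (a - b + 1)
                           - exp ((1 - b) * lam t) / (1 - b)))
        has_field_derivative exp (lam x) + x * (exp (lam x) * l')
          - (1 / a) * (exp ((a - b + 1) * lam x) * l' - exp ((1 - b) * lam x) * l'))
        (at x within S)"
    by (intro DERIV_diff DERIV_cmult has_field_derivative_id_mult_exp
          has_field_derivative_exp_mult_div lam' \<open>a - b + 1 \<noteq> 0\<close> \<open>1 - b \<noteq> 0\<close>)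
  also have "exp (lam x) + x * (exp (lam x) * l')
          - (1 / a) * (exp ((a - b + 1) * lam x) * l' - exp ((1 - b) * lam x) * l')
        = exp (lam x) + l' * (x * exp (lam x)
          - (exp ((a - b + 1) * lam x) - exp ((1 - b) * lam x)) / a)"
    by (simp add: algebra_simps diff_divide_distrib)
  also have "x * exp (lam x) - (exp ((a - b + 1) * lam x) - exp ((1 - b) * lam x)) / a = 0"
    using ultraradical_power_diff[OF eq] \<open>a \<noteq> 0\<close> by simp
  finally show ?thesis by simp
qed

lemma ultraradical_primitive_has_derivative_b_eq_1:
  fixes a x :: "'a :: {real_normed_field, banach}" and lam :: "'a \<Rightarrow> 'a"
  assumes "a \<noteq> 0"
    and lam': "(lam has_field_derivative l') (at x within S)"
    and eq: "exp (a * lam x) = 1 + a * x * exp (lam x)"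
  shows "((\<lambda>t. t * exp (lam t) - (1 / a) * (exp (a * lam t) / a - lam t))
          has_field_derivative exp (lam x)) (at x within S)"
proof -
  have "((\<lambda>t. t * exp (lam t) - (1 / a) * (exp (a * lam t) / a - lam t))
        has_field_derivative exp (lam x) + x * (exp (lam x) * l')
          - (1 / a) * (exp (a * lam x) * l' - l'))
        (at x within S)"
    by (intro DERIV_diff DERIV_cmult has_field_derivative_id_mult_exp
          has_field_derivative_exp_mult_div lam' \<open>a \<noteq> 0\<close>)
  also have "exp (lam x) + x * (exp (lam x) * l') - (1 / a) * (exp (a * lam x) * l' - l')
        = exp (lam x) + l' * (x * exp (lam x) - (exp (a * lam x) - 1) / a)"
    by (simp add: algebra_simps diff_divide_distrib)
  also have "x * exp (lam x) - (exp (a * lam x) - 1) / a = 0"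
    using eq \<open>a \<noteq> 0\<close> by simp
  finally show ?thesis by simp
qed

lemma ultraradical_has_contour_integral:
  fixes a b :: complex and lam :: "complex \<Rightarrow> complex"
  assumes "a \<noteq> 0" "b \<noteq> 1" "a - b + 1 \<noteq> 0"
    and "open U" "lam holomorphic_on U"
    and eq: "\<forall>x\<in>U. exp (a * lam x) = 1 + a * x * exp (b * lam x)"
    and "lam 0 = 0"
    and g: "valid_path g" "path_image g \<subseteq> U" "pathstart g = 0" "pathfinish g = x"
  shows "((\<lambda>t. exp (lam t)) has_contour_integral
           (1 / a) * ((a - b) / (a - b + 1) * (exp ((a - b + 1) * lam x) - 1)
                      + b / (1 - b) * (exp ((1 - b) * lam x) - 1))) g"
proof -
  (* Abstract exponents keep the field arithmetic below from being renormalised by simp. *)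
  define c d where "c = a - b + 1" and "d = 1 - b"
  have "c \<noteq> 0" "d \<noteq> 0"
    using assms(2,3) by (auto simp: c_def d_def)
  define F where "F t = t * exp (lam t) - (1 / a) * (exp (c * lam t) / c - exp (d * lam t) / d)"
    for t
  have "(F has_field_derivative exp (lam t)) (at t within U)" if "t \<in> U" for t
  proof -
    have "(lam has_field_derivative deriv lam t) (at t within U)"
      using holomorphic_derivI[OF assms(5,4) that] by (rule has_field_derivative_at_within)
    then show ?thesis
      unfolding F_def c_def d_def
      using assms(1-3) eq that by (intro ultraradical_primitive_has_derivative) auto
  qed
  then have integral: "((\<lambda>t. exp (lam t)) has_contour_integral (F x - F 0)) g"
    using contour_integral_primitive[OF _ g(1,2)] g(3,4) by fastforce
  have "x \<in> U"
    using g pathfinish_in_path_image by blast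
  then have "a * x * exp (lam x) = exp (c * lam x) - exp (d * lam x)"
    unfolding c_def d_def using ultraradical_power_diff eq by metis
  then have "x * exp (lam x) = (exp (c * lam x) - exp (d * lam x)) / a"
    using \<open>a \<noteq> 0\<close> by (metis nonzero_mult_div_cancel_left mult.assoc)
  then have "F x - F 0 = (exp (c * lam x) - exp (d * lam x)) / a
      - (1 / a) * (exp (c * lam x) / c - exp (d * lam x) / d) + (1 / a) * (1 / c - 1 / d)"
    unfolding F_def using \<open>lam 0 = 0\<close> by simp
  also have "\<dots> = (1 / a) * ((c - 1) / c * (exp (c * lam x) - 1)
                              + (1 - d) / d * (exp (d * lam x) - 1))"
    using \<open>a \<noteq> 0\<close> \<open>c \<noteq> 0\<close> \<open>d \<noteq> 0\<close> by (simp add: field_simps)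
  also have "\<dots> = (1 / a) * ((a - b) / c * (exp (c * lam x) - 1)
                              + b / d * (exp (d * lam x) - 1))"
    by (simp add: c_def d_def)
  finally show ?thesis
    using integral unfolding c_def d_def by simp
qed

theorem mainTheorem10:
  fixes a b :: complex and U :: "complex set" and lam :: "complex \<Rightarrow> complex"
  assumes "a \<noteq> 0"
    and "open U"
    and "lam holomorphic_on U"
    and "\<forall>x\<in>U. exp (a * lam x) = 1 + a * x * exp (b * lam x)"
  shows
    "(b \<noteq> 1 \<and> a - b + 1 \<noteq> 0 \<longrightarrow>
       (\<forall>x\<in>U. 1 - b * x * exp ((b - a) * lam x) \<noteq> 0 \<longrightarrow>
          ((\<lambda>t. t * exp (lam t)
                 - (1 / a) * (exp ((a - b + 1) * lam t) / (a - b + 1)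
                              - exp ((1 - b) * lam t) / (1 - b)))
            has_field_derivative exp (lam x)) (at x)))
   \<and> (b = 1 \<longrightarrow>
       (\<forall>x\<in>U. 1 - b * x * exp ((b - a) * lam x) \<noteq> 0 \<longrightarrow>
          ((\<lambda>t. t * exp (lam t) - (1 / a) * (exp (a * lam t) / a - lam t))
            has_field_derivative exp (lam x)) (at x)))
   \<and> (b \<noteq> 1 \<and> a - b + 1 \<noteq> 0 \<and> (\<exists>r. U = ball 0 r) \<and> lam 0 = 0 \<longrightarrow>
       (\<forall>x\<in>U. \<forall>g. valid_path g \<and> pathstart g = 0 \<and> pathfinish g = x
              \<and> path_image g \<subseteq> U
              \<and> (\<forall>t\<in>path_image g. 1 - b * t * exp ((b - a) * lam t) \<noteq> 0) \<longrightarrow>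
          ((\<lambda>t. exp (lam t)) has_contour_integral
             (1 / a) * ((a - b) / (a - b + 1) * (exp ((a - b + 1) * lam x) - 1)
                        + b / (1 - b) * (exp ((1 - b) * lam x) - 1))) g))"
proof -
  (* The conditions 1 - b x y^(b-a) \<noteq> 0 only serve to make a holomorphic branch exist;
     holomorphy of lam is assumed outright here. *)
  have lam': "(lam has_field_derivative deriv lam x) (at x)" if "x \<in> U" for x
    using assms(2,3) that holomorphic_derivI by blast
  show ?thesis
    apply (intro conjI impI ballI allI)
    subgoal for x
      using assms(1,4) by (intro ultraradical_primitive_has_derivative[OF _ _ _ lam']) auto
    subgoal for x
      using assms(1,4) by (intro ultraradical_primitive_has_derivative_b_eq_1[OF _ lam']) auto
    subgoal for x g
      using assms by (intro ultraradical_has_contour_integral[of a b U]) auto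
    done
qed

end
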